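(* Let $X_1$ be a real random variable with c.d.f. $F$ and mean $\mu$. Let $0<a<b<1$ and $\xi:=1-(b-a)$. Let $p>1$ be such that $\nu_p<+\infty$. Then \[|\mu-\mu^{(a,b)}|\leq\frac{\nu_p\,\rho_{F,p}(\xi)\,\xi^{\frac{p-1}{p}}}{1-\xi}.\]
   Context: $\nu_p:=(\mathbb{E}|X_1-\mu|^p)^{1/p}$. $F^{-1}(q):=\inf\{t:F(t)\ge q\}$ is the quantile transform. $\mu^{(a,b)}:=\frac{1}{b-a}\int_a^bF^{-1}(u)\,du$. For $\xi>0$, $\rho_{F,p}(\xi):=\sup\{(\mathbb{E}[|X_1-\mu|^pZ])^{1/p}/\nu_p: 0\le Z\le1 \text{ a random variable (defined jointly with }X_1), \mathbb{E}Z\le\xi\}$ if $\nu_p>0$, and $\rho_{F,p}(\xi)=0$ if $\nu_p=0$. *)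

theory Defs
  imports "HOL-Probability.Probability"
begin

definition cdfX :: "'a measure \<Rightarrow> ('a \<Rightarrow> real) \<Rightarrow> real \<Rightarrow> real" where
  "cdfX M X = cdf (distr M borel X)"

definition quantile :: "(real \<Rightarrow> real) \<Rightarrow> real \<Rightarrow> real" where
  "quantile F q = Inf {t. F t \<ge> q}"

definition trimmed_mean :: "(real \<Rightarrow> real) \<Rightarrow> real \<Rightarrow> real \<Rightarrow> real" where
  "trimmed_mean F a b = (1 / (b - a)) * (LBINT u=a..b. quantile F u)"

definition nu :: "'a measure \<Rightarrow> ('a \<Rightarrow> real) \<Rightarrow> real \<Rightarrow> real" where
  "nu M X p = (\<integral>x. \<bar>X x - (\<integral>y. X y \<partial>M)\<bar> powr p \<partial>M) powr (1 / p)"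

definition rho :: "'a measure \<Rightarrow> ('a \<Rightarrow> real) \<Rightarrow> real \<Rightarrow> real \<Rightarrow> real" where
  "rho M X p \<xi> = (if nu M X p = 0 then 0 else
     Sup {(\<integral>x. \<bar>X x - (\<integral>y. X y \<partial>M)\<bar> powr p * Z x \<partial>M) powr (1 / p) / nu M X p | Z.
            Z \<in> borel_measurable M \<and> (\<forall>x\<in>space M. 0 \<le> Z x \<and> Z x \<le> 1) \<and>
            (\<integral>x. Z x \<partial>M) \<le> \<xi>})"

end

theory Submission
  imports Defs
begin

text \<open>
  Let U be uniform on (0,1) and Q = F^{-1}, so that Q(U) has law F. With w = 1 - 1_{(a,b)},
  (b - a)(\<mu> - \<mu>^{(a,b)}) = E[(Q(U) - \<mu>) w(U)] and E[w(U)] = \<xi>, hence Hoelder's inequality with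
  weight w bounds (b - a)|\<mu> - \<mu>^{(a,b)}| by E[|Q(U) - \<mu>|^p w(U)]^{1/p} \<xi>^{(p-1)/p}.
  Since \<rho>_{F,p} is a supremum over weights on the probability space of X_1, w(U) is replaced by its
  conditional expectation g(Q(U)) given Q(U): g is 1 below Q(a) and above Q(b), 0 strictly between,
  and on a flat piece of Q at level Q(a) or Q(b) it is the fraction of that piece lying outside
  (a,b). Then Z = g(X_1) is [0,1]-valued with E[Z] = \<xi> and
  E[|X_1 - \<mu>|^p Z] = E[|Q(U) - \<mu>|^p w(U)], which is therefore at most (\<nu>_p \<rho>_{F,p}(\<xi>))^p.
\<close>

lemma Youngs_inequality_scaled:
  fixes y K p :: real
  assumes "0 \<le> y" "0 < K" "1 < p"
  shows "y \<le> y powr p / (p * K powr (p - 1)) + K * (p - 1) / p"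
proof -
  define q where "q = p / (p - 1)"
  define c where "c = K powr ((p - 1) / p)"
  have "1 < q" "1 / p + 1 / q = 1" "0 < c"
    using assms by (auto simp: q_def c_def field_simps)
  then have "(y / c) * c \<le> (y / c) powr p / p + c powr q / q"
    using assms by (intro Youngs_inequality) auto
  moreover have "(y / c) powr p = y powr p / K powr (p - 1)"
    using assms \<open>0 < c\<close> by (simp add: c_def powr_divide powr_powr)
  moreover have "c powr q = K"
    using assms by (simp add: c_def q_def powr_powr)
  ultimately show ?thesis
    using \<open>0 < c\<close> by (simp add: q_def field_simps)
qed

lemma integrable_mult_bounded:
  fixes f g :: "'a \<Rightarrow> real"
  assumes "integrable M f" "g \<in> borel_measurable M" "\<And>x. x \<in> space M \<Longrightarrow> \<bar>g x\<bar> \<le> 1"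
  shows "integrable M (\<lambda>x. f x * g x)"
  using assms
  by (intro Bochner_Integration.integrable_bound[OF assms(1)])
     (auto intro!: AE_I2 mult_left_le simp: abs_mult)

lemma Holder_inequality_weighted:
  fixes f w :: "'a \<Rightarrow> real" and p :: real
  assumes p: "1 < p"
    and f: "\<And>x. x \<in> space M \<Longrightarrow> 0 \<le> f x" and w: "\<And>x. x \<in> space M \<Longrightarrow> 0 \<le> w x"
    and int: "integrable M (\<lambda>x. f x * w x)" "integrable M (\<lambda>x. f x powr p * w x)" "integrable M w"
  shows "(\<integral>x. f x * w x \<partial>M)
    \<le> (\<integral>x. f x powr p * w x \<partial>M) powr (1 / p) * (\<integral>x. w x \<partial>M) powr ((p - 1) / p)"
proof -
  define S where "S = (\<integral>x. f x powr p * w x \<partial>M)"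
  define W where "W = (\<integral>x. w x \<partial>M)"
  have "0 \<le> S" "0 \<le> W"
    using f w by (auto simp: S_def W_def intro!: Bochner_Integration.integral_nonneg)
  show ?thesis
  proof (cases "S = 0 \<or> W = 0")
    case True
    then have "(AE x in M. f x powr p * w x = 0) \<or> (AE x in M. w x = 0)"
      using int f w by (auto simp: S_def W_def integral_nonneg_eq_0_iff_AE)
    then have "AE x in M. f x * w x = 0"
      by (auto elim: AE_mp)
    then show ?thesis
      by (simp add: integral_eq_zero_AE S_def W_def)
  next
    case False
    with \<open>0 \<le> S\<close> \<open>0 \<le> W\<close> have "0 < S" "0 < W" by auto
    \<comment> \<open>the scale at which Young's inequality, integrated against w, becomes sharp\<close>
    define K where "K = (S / W) powr (1 / p)"
    have "0 < K" using \<open>0 < S\<close> \<open>0 < W\<close> by (simp add: K_def)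
    have "K powr (p - 1) = S / W / K"
      using p \<open>0 < K\<close> \<open>0 < S\<close> \<open>0 < W\<close> by (simp add: K_def powr_diff powr_powr)
    have "(\<integral>x. f x * w x \<partial>M)
        \<le> (\<integral>x. (f x powr p / (p * K powr (p - 1)) + K * (p - 1) / p) * w x \<partial>M)"
    proof (rule integral_mono)
      fix x assume "x \<in> space M"
      show "f x * w x \<le> (f x powr p / (p * K powr (p - 1)) + K * (p - 1) / p) * w x"
        using \<open>x \<in> space M\<close>
        by (intro mult_right_mono Youngs_inequality_scaled[OF f \<open>0 < K\<close> p] w)
    qed (use int in \<open>auto simp: distrib_right\<close>)
    also have "\<dots> = S / (p * K powr (p - 1)) + K * (p - 1) / p * W"
      using int by (simp add: S_def W_def distrib_right)
    also have "\<dots> = K * W"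
      using p \<open>0 < K\<close> \<open>0 < S\<close> \<open>0 < W\<close> unfolding \<open>K powr (p - 1) = S / W / K\<close>
      by (simp add: field_simps)
    also have "\<dots> = S powr (1 / p) * W powr ((p - 1) / p)"
    proof -
      have "W powr ((p - 1) / p) = W / W powr (1 / p)"
        using p \<open>0 < W\<close> by (simp add: diff_divide_distrib powr_diff)
      then show ?thesis
        using \<open>0 < S\<close> \<open>0 < W\<close> by (simp add: K_def powr_divide)
    qed
    finally show ?thesis by (simp add: S_def W_def)
  qed
qed

lemma weighted_moment_le_nu:
  fixes X Z :: "'a \<Rightarrow> real"
  assumes p: "0 < p"
    and int: "integrable M (\<lambda>x. \<bar>X x - (\<integral>y. X y \<partial>M)\<bar> powr p)"
    and Z: "Z \<in> borel_measurable M" "\<forall>x\<in>space M. 0 \<le> Z x \<and> Z x \<le> 1"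
  shows "(\<integral>x. \<bar>X x - (\<integral>y. X y \<partial>M)\<bar> powr p * Z x \<partial>M) powr (1 / p) \<le> nu M X p"
proof -
  have "integrable M (\<lambda>x. \<bar>X x - (\<integral>y. X y \<partial>M)\<bar> powr p * Z x)"
    using Z by (intro integrable_mult_bounded[OF int]) auto
  then have "(\<integral>x. \<bar>X x - (\<integral>y. X y \<partial>M)\<bar> powr p * Z x \<partial>M)
      \<le> (\<integral>x. \<bar>X x - (\<integral>y. X y \<partial>M)\<bar> powr p \<partial>M)"
    using int Z by (intro integral_mono) (auto intro: mult_left_le)
  moreover have "0 \<le> (\<integral>x. \<bar>X x - (\<integral>y. X y \<partial>M)\<bar> powr p * Z x \<partial>M)"
    using Z by (intro Bochner_Integration.integral_nonneg) auto
  ultimately show ?thesis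
    unfolding nu_def using p by (intro powr_mono2) auto
qed

lemma weighted_moment_le_nu_rho:
  fixes X Z :: "'a \<Rightarrow> real"
  assumes p: "0 < p"
    and int: "integrable M (\<lambda>x. \<bar>X x - (\<integral>y. X y \<partial>M)\<bar> powr p)"
    and Z: "Z \<in> borel_measurable M" "\<forall>x\<in>space M. 0 \<le> Z x \<and> Z x \<le> 1" "(\<integral>x. Z x \<partial>M) \<le> \<xi>"
  shows "(\<integral>x. \<bar>X x - (\<integral>y. X y \<partial>M)\<bar> powr p * Z x \<partial>M) powr (1 / p) \<le> nu M X p * rho M X p \<xi>"
proof (cases "nu M X p = 0")
  case True
  then show ?thesis
    using weighted_moment_le_nu[OF p int Z(1,2)] by simp
next
  case False
  then have "0 < nu M X p" by (simp add: nu_def)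
  define R where "R = {(\<integral>x. \<bar>X x - (\<integral>y. X y \<partial>M)\<bar> powr p * Z x \<partial>M) powr (1 / p) / nu M X p | Z.
    Z \<in> borel_measurable M \<and> (\<forall>x\<in>space M. 0 \<le> Z x \<and> Z x \<le> 1) \<and> (\<integral>x. Z x \<partial>M) \<le> \<xi>}"
  have "bdd_above R"
    using weighted_moment_le_nu[OF p int] \<open>0 < nu M X p\<close> by (intro bdd_aboveI[of _ 1]) (auto simp: R_def)
  moreover have "(\<integral>x. \<bar>X x - (\<integral>y. X y \<partial>M)\<bar> powr p * Z x \<partial>M) powr (1 / p) / nu M X p \<in> R"
    using Z by (auto simp: R_def)
  ultimately have "(\<integral>x. \<bar>X x - (\<integral>y. X y \<partial>M)\<bar> powr p * Z x \<partial>M) powr (1 / p) / nu M X p \<le> rho M X p \<xi>"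
    using False by (simp add: rho_def R_def[symmetric] cSup_upper)
  then show ?thesis
    using \<open>0 < nu M X p\<close> by (simp add: field_simps)
qed

abbreviation lborel01 :: "real measure" where
  "lborel01 \<equiv> restrict_space lborel {0<..<1}"

lemma prob_space_lborel01: "prob_space lborel01"
  by (auto simp: space_restrict_space emeasure_restrict_space intro!: prob_spaceI)

text \<open>The quantile transform is the pseudo-inverse used in the library's proof of Skorokhod's
  theorem, which shows that its law under the uniform distribution is the law of X.\<close>

lemma quantile_cdfX:
  assumes "prob_space M" "X \<in> borel_measurable M"
  shows "quantile (cdfX M X) \<in> borel_measurable lborel01"
    and "mono_on {0<..<1} (quantile (cdfX M X))"
    and "distr lborel01 borel (quantile (cdfX M X)) = distr M borel X"
proof -
  interpret cdf_distribution "distr M borel X"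
    using assms by (simp add: cdf_distribution_def prob_space.real_distribution_distr)
  have Q: "quantile (cdfX M X) = I"
    by (simp add: quantile_def cdfX_def fun_eq_iff)
  have "sets lborel01 = sets (restrict_space borel {0<..<1})"
    by (rule sets_restrict_space_cong) simp
  then show "quantile (cdfX M X) \<in> borel_measurable lborel01"
    unfolding Q using measurable_CI by (simp cong: measurable_cong_sets)
  show "mono_on {0<..<1} (quantile (cdfX M X))"
    unfolding Q by (rule mono_I)
  show "distr lborel01 borel (quantile (cdfX M X)) = distr M borel X"
    unfolding Q by (rule distr_I_eq_M)
qed

lemma integral_quantile_cdfX:
  fixes \<psi> :: "real \<Rightarrow> real"
  assumes "prob_space M" "X \<in> borel_measurable M" "\<psi> \<in> borel_measurable borel"
  shows "(\<integral>u. \<psi> (quantile (cdfX M X) u) \<partial>lborel01) = (\<integral>x. \<psi> (X x) \<partial>M)"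
  using integral_distr[OF quantile_cdfX(1)[OF assms(1,2)] assms(3)]
    integral_distr[OF assms(2,3)]
  by (simp add: quantile_cdfX(3)[OF assms(1,2)])

lemma integrable_quantile_cdfX_iff:
  fixes \<psi> :: "real \<Rightarrow> real"
  assumes "prob_space M" "X \<in> borel_measurable M" "\<psi> \<in> borel_measurable borel"
  shows "integrable lborel01 (\<lambda>u. \<psi> (quantile (cdfX M X) u)) \<longleftrightarrow> integrable M (\<lambda>x. \<psi> (X x))"
  using integrable_distr_eq[OF quantile_cdfX(1)[OF assms(1,2)] assms(3)]
    integrable_distr_eq[OF assms(2,3)]
  by (simp add: quantile_cdfX(3)[OF assms(1,2)])

lemma interval_integral_eq_lborel01:
  fixes f :: "real \<Rightarrow> real" and a b :: real
  assumes "0 \<le> a" "a \<le> b" "b \<le> 1"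
  shows "(LBINT u=a..b. f u) = (\<integral>u. f u * indicator {a<..<b} u \<partial>lborel01)"
proof -
  have "(LBINT u=a..b. f u) = (\<integral>u. indicator {0<..<1} u *\<^sub>R (f u * indicator {a<..<b} u) \<partial>lborel)"
    using assms
    by (auto simp: interval_lebesgue_integral_def set_lebesgue_integral_def indicator_def
        intro!: Bochner_Integration.integral_cong)
  also have "\<dots> = (\<integral>u. f u * indicator {a<..<b} u \<partial>lborel01)"
    by (rule integral_restrict_space[symmetric]) simp
  finally show ?thesis .
qed

lemma Ioo_in_sets_lborel01: "0 \<le> (a::real) \<Longrightarrow> b \<le> 1 \<Longrightarrow> {a<..<b} \<in> sets lborel01"
  by (subst sets_restrict_space_iff) auto

lemma measure_Ioo_lborel01: "0 \<le> (a::real) \<Longrightarrow> a \<le> b \<Longrightarrow> b \<le> 1 \<Longrightarrow> measure lborel01 {a<..<b} = b - a"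
  by (subst measure_restrict_space) auto

lemma integral_one_minus_indicator_lborel01:
  fixes a b :: real
  assumes "0 \<le> a" "a \<le> b" "b \<le> 1"
  shows "(\<integral>u. 1 - indicator {a<..<b} u \<partial>lborel01) = 1 - (b - a)"
proof -
  interpret prob_space lborel01 by (rule prob_space_lborel01)
  have "prob {0<..<1} = 1" "max a 0 = a" "min b 1 = b"
    using prob_space assms by (auto simp: space_restrict_space)
  then show ?thesis
    using assms Ioo_in_sets_lborel01 by (simp add: measure_Ioo_lborel01 emeasure_eq_measure)
qed

lemma trimmed_mean_deviation_le:
  fixes F :: "real \<Rightarrow> real" and \<mu> a b p :: real
  defines "Q \<equiv> quantile F"
  assumes Q: "integrable lborel01 Q" "(\<integral>u. Q u \<partial>lborel01) = \<mu>"
    and mom: "integrable lborel01 (\<lambda>u. \<bar>Q u - \<mu>\<bar> powr p)"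
    and ab: "0 \<le> a" "a < b" "b \<le> 1" and p: "1 < p"
  shows "(b - a) * \<bar>\<mu> - trimmed_mean F a b\<bar>
    \<le> (\<integral>u. \<bar>Q u - \<mu>\<bar> powr p * (1 - indicator {a<..<b} u) \<partial>lborel01) powr (1 / p)
       * (1 - (b - a)) powr ((p - 1) / p)"
proof -
  interpret prob_space lborel01 by (rule prob_space_lborel01)
  have Iab: "{a<..<b} \<in> sets lborel01"
    using ab by (intro Ioo_in_sets_lborel01) auto
  define w :: "real \<Rightarrow> real" where "w u = 1 - indicator {a<..<b} u" for u
  have w: "0 \<le> w u" "w u \<le> 1" for u
    by (auto simp: w_def indicator_def)
  have w_meas: "w \<in> borel_measurable lborel01"
    using Iab unfolding w_def by measurable
  have int_w: "integrable lborel01 (\<lambda>u. f u * w u)" if "integrable lborel01 f" for f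
    using that w_meas w by (intro integrable_mult_bounded) (auto simp: abs_le_iff)
  have int_QI: "integrable lborel01 (\<lambda>u. Q u * indicator {a<..<b} u)"
    using integrable_mult_indicator[OF Iab Q(1)] by (simp add: mult.commute)
  have Ew: "(\<integral>u. w u \<partial>lborel01) = 1 - (b - a)"
    using ab by (simp add: w_def integral_one_minus_indicator_lborel01)
  have "(b - a) * trimmed_mean F a b = (\<integral>u. Q u * indicator {a<..<b} u \<partial>lborel01)"
    using ab by (simp add: trimmed_mean_def Q_def interval_integral_eq_lborel01)
  moreover have "(\<integral>u. Q u * w u \<partial>lborel01) = \<mu> - (\<integral>u. Q u * indicator {a<..<b} u \<partial>lborel01)"
    using Q int_QI by (simp add: w_def right_diff_distrib)
  moreover have "(\<integral>u. (Q u - \<mu>) * w u \<partial>lborel01) = (\<integral>u. Q u * w u \<partial>lborel01) - \<mu> * (1 - (b - a))"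
    using int_w[OF Q(1)] int_w[of "\<lambda>_. 1"] Ew by (simp add: left_diff_distrib)
  ultimately have "(b - a) * (\<mu> - trimmed_mean F a b) = (\<integral>u. (Q u - \<mu>) * w u \<partial>lborel01)"
    by (simp add: algebra_simps)
  then have "(b - a) * \<bar>\<mu> - trimmed_mean F a b\<bar> = \<bar>\<integral>u. (Q u - \<mu>) * w u \<partial>lborel01\<bar>"
    using ab by (metis abs_mult abs_of_pos diff_gt_0_iff_gt)
  also have "\<dots> \<le> (\<integral>u. \<bar>Q u - \<mu>\<bar> * w u \<partial>lborel01)"
    using integral_abs_bound[of lborel01 "\<lambda>u. (Q u - \<mu>) * w u"] w by (simp add: abs_mult)
  also have "\<dots> \<le> (\<integral>u. \<bar>Q u - \<mu>\<bar> powr p * w u \<partial>lborel01) powr (1 / p) * (1 - (b - a)) powr ((p - 1) / p)"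
    unfolding Ew[symmetric] using p w Q(1) mom int_w[of "\<lambda>_. 1"]
    by (intro Holder_inequality_weighted int_w) auto
  finally show ?thesis
    by (simp add: w_def)
qed

definition level_fraction :: "(real \<Rightarrow> real) \<Rightarrow> real set \<Rightarrow> real \<Rightarrow> real" where
  "level_fraction Q S c =
     measure lborel01 {u \<in> {0<..<1}. u \<in> S \<and> Q u = Q c} / measure lborel01 {u \<in> {0<..<1}. Q u = Q c}"

text \<open>\<open>tail_weight Q a b (Q u)\<close> is the conditional expectation of \<open>1 - indicator {a<..<b} u\<close>
  given \<open>Q u\<close>. If a level set of Q is null, \<open>level_fraction\<close> is the junk value 0, which is
  harmless because it is only integrated over that level set.\<close>

definition tail_weight :: "(real \<Rightarrow> real) \<Rightarrow> real \<Rightarrow> real \<Rightarrow> real \<Rightarrow> real" where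
  "tail_weight Q a b x = indicator {..<Q a} x + indicator {Q b<..} x
     + level_fraction Q {..a} a * indicator {Q a} x + level_fraction Q {b..} b * indicator {Q b} x"

lemma borel_measurable_tail_weight[measurable]: "tail_weight Q a b \<in> borel_measurable borel"
  unfolding tail_weight_def by measurable

lemma level_set_in_sets_lborel01:
  fixes Q :: "real \<Rightarrow> real"
  assumes "Q \<in> borel_measurable lborel01" "S \<in> sets borel"
  shows "{u \<in> {0<..<1}. u \<in> S \<and> Q u = c} \<in> sets lborel01"
proof -
  have "{u \<in> {0<..<1}. u \<in> S \<and> Q u = c} = (Q -` {c} \<inter> space lborel01) \<inter> (S \<inter> space lborel01)"
    by (auto simp: space_restrict_space)
  moreover have "S \<inter> space lborel01 \<in> sets lborel01"
    using assms(2) by (auto simp: sets_restrict_space space_restrict_space)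
  ultimately show ?thesis
    using measurable_sets[OF assms(1), of "{c}"] by (metis sets.Int borel_singleton sets.empty_sets)
qed

lemma level_fraction_nonneg: "0 \<le> level_fraction Q S c"
  by (simp add: level_fraction_def)

lemma level_fraction_add_le:
  fixes Q :: "real \<Rightarrow> real"
  assumes Q: "Q \<in> borel_measurable lborel01" and S: "S \<in> sets borel" "T \<in> sets borel"
    and disj: "S \<inter> T = {}" and c: "Q d = Q c"
  shows "level_fraction Q S c + level_fraction Q T d \<le> 1"
proof -
  interpret prob_space lborel01 by (rule prob_space_lborel01)
  define L where "L = {u \<in> {0<..<1}. Q u = Q c}"
  define E where "E S = {u \<in> {0<..<1}. u \<in> S \<and> Q u = Q c}" for S
  have sets: "L \<in> sets lborel01" "E S \<in> sets lborel01" "E T \<in> sets lborel01"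
    using level_set_in_sets_lborel01[OF Q] level_set_in_sets_lborel01[OF Q, of UNIV] S
    by (auto simp: L_def E_def)
  have "measure lborel01 (E S) + measure lborel01 (E T) = measure lborel01 (E S \<union> E T)"
    using sets disj by (subst finite_measure_Union) (auto simp: E_def)
  also have "\<dots> \<le> measure lborel01 L"
    using sets by (intro finite_measure_mono) (auto simp: E_def L_def)
  finally have "(measure lborel01 (E S) + measure lborel01 (E T)) / measure lborel01 L \<le> 1"
    by (auto simp: divide_le_eq_1 less_le)
  then show ?thesis
    by (simp add: level_fraction_def c L_def E_def add_divide_distrib)
qed

lemma tail_weight_bounds:
  fixes Q :: "real \<Rightarrow> real"
  assumes Q: "Q \<in> borel_measurable lborel01" "mono_on {0<..<1} Q"
    and ab: "0 < a" "a < b" "b < 1"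
  shows "0 \<le> tail_weight Q a b x" "tail_weight Q a b x \<le> 1"
proof -
  have le1: "level_fraction Q S c \<le> 1" if "S \<in> sets borel" for S c
    using level_fraction_add_le[OF Q(1) that, of "{}" c c] by (simp add: level_fraction_def)
  have "Q a \<le> Q b"
    using ab by (intro mono_onD[OF Q(2)]) auto
  moreover have "level_fraction Q {..a} a + level_fraction Q {b..} b \<le> 1" if "Q a = Q b"
    using ab that by (intro level_fraction_add_le[OF Q(1)]) auto
  ultimately show "0 \<le> tail_weight Q a b x" "tail_weight Q a b x \<le> 1"
    using le1[of "{..a}" a] le1[of "{b..}" b] level_fraction_nonneg[of Q "{..a}" a]
      level_fraction_nonneg[of Q "{b..}" b]
    by (auto simp: tail_weight_def indicator_def)
qed

lemma integral_level_fraction: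
  fixes Q f :: "real \<Rightarrow> real"
  assumes Q: "Q \<in> borel_measurable lborel01" and S: "S \<in> sets borel"
  shows "(\<integral>u. f (Q u) * (level_fraction Q S c * indicator {Q c} (Q u)) \<partial>lborel01)
    = (\<integral>u. f (Q u) * indicator {u \<in> {0<..<1}. u \<in> S \<and> Q u = Q c} u \<partial>lborel01)"
proof -
  interpret prob_space lborel01 by (rule prob_space_lborel01)
  define L where "L = {u \<in> {0<..<1}. Q u = Q c}"
  define E where "E = {u \<in> {0<..<1}. u \<in> S \<and> Q u = Q c}"
  have sets: "L \<in> sets lborel01" "E \<in> sets lborel01"
    using level_set_in_sets_lborel01[OF Q] level_set_in_sets_lborel01[OF Q, of UNIV] S
    by (auto simp: L_def E_def)
  have "level_fraction Q S c * measure lborel01 L = measure lborel01 E"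
  proof (cases "measure lborel01 L = 0")
    case True
    moreover have "measure lborel01 E \<le> measure lborel01 L"
      using sets by (intro finite_measure_mono) (auto simp: E_def L_def)
    ultimately show ?thesis
      using measure_nonneg[of lborel01 E] by simp
  qed (simp add: level_fraction_def L_def E_def)
  moreover have "L \<inter> {0<..<1} = L" "E \<inter> {0<..<1} = E"
    by (auto simp: L_def E_def)
  ultimately have "(\<integral>u. f (Q c) * level_fraction Q S c * indicator L u \<partial>lborel01)
      = (\<integral>u. f (Q c) * indicator E u \<partial>lborel01)"
    using sets by (simp add: emeasure_eq_measure)
  moreover have "(\<integral>u. f (Q u) * (level_fraction Q S c * indicator {Q c} (Q u)) \<partial>lborel01)
      = (\<integral>u. f (Q c) * level_fraction Q S c * indicator L u \<partial>lborel01)"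
    by (intro Bochner_Integration.integral_cong) (auto simp: L_def indicator_def space_restrict_space)
  moreover have "(\<integral>u. f (Q u) * indicator E u \<partial>lborel01) = (\<integral>u. f (Q c) * indicator E u \<partial>lborel01)"
    by (intro Bochner_Integration.integral_cong) (auto simp: E_def indicator_def)
  ultimately show ?thesis
    by (simp add: E_def)
qed

lemma one_minus_indicator_Ioo_eq:
  fixes Q :: "real \<Rightarrow> real"
  assumes Q: "mono_on {0<..<1} Q" and ab: "0 < a" "a < b" "b < 1" and u: "u \<in> {0<..<1}"
  shows "1 - indicator {a<..<b} u = (indicator {..<Q a} (Q u) + indicator {Q b<..} (Q u)
    + indicator {u \<in> {0<..<1}. u \<in> {..a} \<and> Q u = Q a} u
    + indicator {u \<in> {0<..<1}. u \<in> {b..} \<and> Q u = Q b} u :: real)"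
proof -
  have mono: "Q s \<le> Q t" if "s \<in> {0<..<1}" "t \<in> {0<..<1}" "s \<le> t" for s t
    using that by (rule mono_onD[OF Q])
  have "Q a \<le> Q b" using ab by (intro mono) auto
  consider "u \<le> a" | "a < u" "u < b" | "b \<le> u" by linarith
  then show ?thesis
  proof cases
    case 1
    then have "Q u \<le> Q a" using ab u by (intro mono) auto
    with 1 \<open>Q a \<le> Q b\<close> ab u show ?thesis by (auto simp: indicator_def)
  next
    case 2
    then have "Q a \<le> Q u" "Q u \<le> Q b" using ab u by (auto intro: mono)
    with 2 show ?thesis by (auto simp: indicator_def)
  next
    case 3
    then have "Q b \<le> Q u" using ab u by (intro mono) auto
    with 3 \<open>Q a \<le> Q b\<close> ab u show ?thesis by (auto simp: indicator_def)
  qed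
qed

lemma integral_tail_weight:
  fixes Q \<psi> :: "real \<Rightarrow> real"
  assumes Q: "Q \<in> borel_measurable lborel01" "mono_on {0<..<1} Q"
    and ab: "0 < a" "a < b" "b < 1"
    and \<psi>: "\<psi> \<in> borel_measurable borel" "integrable lborel01 (\<lambda>u. \<psi> (Q u))"
  shows "(\<integral>u. \<psi> (Q u) * tail_weight Q a b (Q u) \<partial>lborel01)
    = (\<integral>u. \<psi> (Q u) * (1 - indicator {a<..<b} u) \<partial>lborel01)"
proof -
  note [measurable] = Q(1)
  define Ea where "Ea = {u \<in> {0<..<1}. u \<in> {..a} \<and> Q u = Q a}"
  define Eb where "Eb = {u \<in> {0<..<1}. u \<in> {b..} \<and> Q u = Q b}"
  have [measurable]: "Ea \<in> sets lborel01" "Eb \<in> sets lborel01"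
    unfolding Ea_def Eb_def by (intro level_set_in_sets_lborel01[OF Q(1)]; simp)+
  have int: "integrable lborel01 (\<lambda>u. \<psi> (Q u) * g u)"
    if "g \<in> borel_measurable lborel01" "\<And>u. \<bar>g u\<bar> \<le> 1" for g
    using that by (intro integrable_mult_bounded[OF \<psi>(2)])
  have "\<bar>level_fraction Q S c\<bar> \<le> 1" if "S \<in> sets borel" for S c
    using level_fraction_add_le[OF Q(1) that, of "{}" c c] level_fraction_nonneg[of Q S c]
    by (simp add: level_fraction_def)
  then have ints:
    "integrable lborel01 (\<lambda>u. \<psi> (Q u) * indicator {..<Q a} (Q u))"
    "integrable lborel01 (\<lambda>u. \<psi> (Q u) * indicator {Q b<..} (Q u))"
    "integrable lborel01 (\<lambda>u. \<psi> (Q u) * (level_fraction Q {..a} a * indicator {Q a} (Q u)))"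
    "integrable lborel01 (\<lambda>u. \<psi> (Q u) * (level_fraction Q {b..} b * indicator {Q b} (Q u)))"
    "integrable lborel01 (\<lambda>u. \<psi> (Q u) * indicator Ea u)"
    "integrable lborel01 (\<lambda>u. \<psi> (Q u) * indicator Eb u)"
    by (intro int; force simp: abs_mult indicator_def)+
  have "(\<integral>u. \<psi> (Q u) * tail_weight Q a b (Q u) \<partial>lborel01)
      = (\<integral>u. \<psi> (Q u) * indicator {..<Q a} (Q u) \<partial>lborel01)
        + (\<integral>u. \<psi> (Q u) * indicator {Q b<..} (Q u) \<partial>lborel01)
        + (\<integral>u. \<psi> (Q u) * (level_fraction Q {..a} a * indicator {Q a} (Q u)) \<partial>lborel01)
        + (\<integral>u. \<psi> (Q u) * (level_fraction Q {b..} b * indicator {Q b} (Q u)) \<partial>lborel01)"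
    using ints by (simp add: tail_weight_def distrib_left)
  also have "\<dots> = (\<integral>u. \<psi> (Q u) * indicator {..<Q a} (Q u) \<partial>lborel01)
        + (\<integral>u. \<psi> (Q u) * indicator {Q b<..} (Q u) \<partial>lborel01)
        + (\<integral>u. \<psi> (Q u) * indicator Ea u \<partial>lborel01)
        + (\<integral>u. \<psi> (Q u) * indicator Eb u \<partial>lborel01)"
    unfolding Ea_def Eb_def by (simp add: integral_level_fraction[OF Q(1)])
  also have "\<dots> = (\<integral>u. \<psi> (Q u) * (indicator {..<Q a} (Q u) + indicator {Q b<..} (Q u)
        + indicator Ea u + indicator Eb u) \<partial>lborel01)"
    using ints by (simp add: distrib_left)
  also have "\<dots> = (\<integral>u. \<psi> (Q u) * (1 - indicator {a<..<b} u) \<partial>lborel01)"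
    unfolding Ea_def Eb_def using one_minus_indicator_Ioo_eq[OF Q(2) ab]
    by (intro Bochner_Integration.integral_cong) (auto simp: space_restrict_space)
  finally show ?thesis .
qed

lemma integral_tail_weight_cdfX:
  fixes M :: "'a measure" and X :: "'a \<Rightarrow> real" and \<psi> :: "real \<Rightarrow> real"
  defines "Q \<equiv> quantile (cdfX M X)"
  assumes M: "prob_space M" "X \<in> borel_measurable M" and ab: "0 < a" "a < b" "b < 1"
    and \<psi>: "\<psi> \<in> borel_measurable borel" "integrable M (\<lambda>x. \<psi> (X x))"
  shows "(\<integral>x. \<psi> (X x) * tail_weight Q a b (X x) \<partial>M)
    = (\<integral>u. \<psi> (Q u) * (1 - indicator {a<..<b} u) \<partial>lborel01)"
proof -
  have "(\<lambda>x. \<psi> x * tail_weight Q a b x) \<in> borel_measurable borel"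
    using \<psi>(1) by measurable
  then have "(\<integral>x. \<psi> (X x) * tail_weight Q a b (X x) \<partial>M)
      = (\<integral>u. \<psi> (Q u) * tail_weight Q a b (Q u) \<partial>lborel01)"
    unfolding Q_def by (rule integral_quantile_cdfX[OF M, symmetric])
  also have "\<dots> = (\<integral>u. \<psi> (Q u) * (1 - indicator {a<..<b} u) \<partial>lborel01)"
    using quantile_cdfX[OF M] ab \<psi> integrable_quantile_cdfX_iff[OF M \<psi>(1)]
    by (intro integral_tail_weight) (auto simp: Q_def)
  finally show ?thesis .
qed

lemma tail_weight_cdfX_admissible:
  fixes M :: "'a measure" and X :: "'a \<Rightarrow> real"
  defines "Q \<equiv> quantile (cdfX M X)"
  assumes M: "prob_space M" "X \<in> borel_measurable M" and ab: "0 < a" "a < b" "b < 1"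
  shows "(\<lambda>x. tail_weight Q a b (X x)) \<in> borel_measurable M"
    and "\<forall>x\<in>space M. 0 \<le> tail_weight Q a b (X x) \<and> tail_weight Q a b (X x) \<le> 1"
    and "(\<integral>x. tail_weight Q a b (X x) \<partial>M) = 1 - (b - a)"
proof -
  interpret prob_space M by (rule M(1))
  show "(\<lambda>x. tail_weight Q a b (X x)) \<in> borel_measurable M"
    using M(2) by measurable
  show "\<forall>x\<in>space M. 0 \<le> tail_weight Q a b (X x) \<and> tail_weight Q a b (X x) \<le> 1"
    using tail_weight_bounds[OF quantile_cdfX(1,2)[OF M] ab] by (simp add: Q_def)
  have "(\<integral>x. 1 * tail_weight Q a b (X x) \<partial>M) = (\<integral>u. 1 * (1 - indicator {a<..<b} u) \<partial>lborel01)"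
    unfolding Q_def by (rule integral_tail_weight_cdfX[OF M ab]) simp_all
  then show "(\<integral>x. tail_weight Q a b (X x) \<partial>M) = 1 - (b - a)"
    using ab by (simp add: integral_one_minus_indicator_lborel01)
qed

lemma tail_moment_quantile_le_nu_rho:
  fixes M :: "'a measure" and X :: "'a \<Rightarrow> real"
  defines "Q \<equiv> quantile (cdfX M X)" and "\<mu> \<equiv> (\<integral>x. X x \<partial>M)"
  assumes M: "prob_space M" "X \<in> borel_measurable M" and ab: "0 < a" "a < b" "b < 1"
    and p: "0 < p" and mom: "integrable M (\<lambda>x. \<bar>X x - \<mu>\<bar> powr p)"
  shows "(\<integral>u. \<bar>Q u - \<mu>\<bar> powr p * (1 - indicator {a<..<b} u) \<partial>lborel01) powr (1 / p)
    \<le> nu M X p * rho M X p (1 - (b - a))"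
proof -
  have "(\<integral>u. \<bar>Q u - \<mu>\<bar> powr p * (1 - indicator {a<..<b} u) \<partial>lborel01)
      = (\<integral>x. \<bar>X x - \<mu>\<bar> powr p * tail_weight Q a b (X x) \<partial>M)"
    using integral_tail_weight_cdfX[OF M ab, of "\<lambda>x. \<bar>x - \<mu>\<bar> powr p"] mom by (simp add: Q_def)
  also have "\<dots> powr (1 / p) \<le> nu M X p * rho M X p (1 - (b - a))"
    unfolding \<mu>_def Q_def using tail_weight_cdfX_admissible[OF M ab] p mom[unfolded \<mu>_def]
    by (intro weighted_moment_le_nu_rho) auto
  finally show ?thesis .
qed

theorem proposition4p1:
  fixes M :: "'a measure" and X :: "'a \<Rightarrow> real" and a b p :: real
  assumes "prob_space M"
    and "X \<in> borel_measurable M"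
    and "integrable M X"
    and "0 < a" and "a < b" and "b < 1"
    and "p > 1"
    and "integrable M (\<lambda>x. \<bar>X x - (\<integral>y. X y \<partial>M)\<bar> powr p)"
  shows "\<bar>(\<integral>x. X x \<partial>M) - trimmed_mean (cdfX M X) a b\<bar>
     \<le> nu M X p * rho M X p (1 - (b - a)) * (1 - (b - a)) powr ((p - 1) / p) / (1 - (1 - (b - a)))"
proof -
  note M = assms(1,2) and ab = assms(4-6)
  define Q where "Q = quantile (cdfX M X)"
  define \<mu> where "\<mu> = (\<integral>x. X x \<partial>M)"
  define \<xi> where "\<xi> = 1 - (b - a)"
  have mom: "integrable M (\<lambda>x. \<bar>X x - \<mu>\<bar> powr p)"
    using assms(8) by (simp add: \<mu>_def)
  have "integrable lborel01 Q" "(\<integral>u. Q u \<partial>lborel01) = \<mu>" "integrable lborel01 (\<lambda>u. \<bar>Q u - \<mu>\<bar> powr p)"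
    using integrable_quantile_cdfX_iff[OF M, of "\<lambda>x. x"] integral_quantile_cdfX[OF M, of "\<lambda>x. x"]
      integrable_quantile_cdfX_iff[OF M, of "\<lambda>x. \<bar>x - \<mu>\<bar> powr p"] assms(3) mom
    by (simp_all add: Q_def \<mu>_def)
  then have "(b - a) * \<bar>\<mu> - trimmed_mean (cdfX M X) a b\<bar>
      \<le> (\<integral>u. \<bar>Q u - \<mu>\<bar> powr p * (1 - indicator {a<..<b} u) \<partial>lborel01) powr (1 / p) * \<xi> powr ((p - 1) / p)"
    using ab assms(7) unfolding Q_def \<xi>_def by (intro trimmed_mean_deviation_le) auto
  also have "\<dots> \<le> nu M X p * rho M X p \<xi> * \<xi> powr ((p - 1) / p)"
    using tail_moment_quantile_le_nu_rho[OF M ab _ mom[unfolded \<mu>_def]] assms(7)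
    by (intro mult_right_mono) (simp_all add: Q_def \<mu>_def \<xi>_def)
  finally have "(b - a) * \<bar>\<mu> - trimmed_mean (cdfX M X) a b\<bar> \<le> nu M X p * rho M X p \<xi> * \<xi> powr ((p - 1) / p)" .
  moreover have "0 < b - a"
    using ab by simp
  ultimately show ?thesis
    by (simp add: \<mu>_def \<xi>_def pos_le_divide_eq mult.commute)
qed

end
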